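(* Let $U$ be a Banach space and $(u_n)_{n\ge1}$ a convergent sequence in $U$. Let $A_1,A_2,\ldots\in\mathcal{L}(U)$ be bounded linear operators such that there exists $c<1$ with $\|A_nu\|\le c\|u\|$ for all $u\in U$ and all $n\ge1$, and such that for every $u\in U$ the sequence $(A_nu)_{n\ge1}$ converges in $U$. Let $(v_n)_{n\ge1}\subset U$ satisfy $v_{n+1}=A_nv_n+u_n$ for all $n\ge1$. Then $(v_n)_{n\ge1}$ converges in $U$. *)

theory Defs
  imports "HOL-Analysis.Analysis"
begin

end

theory Submission
  imports Defs
begin

text \<open>
  The strong limit \<open>B\<close> of the operators is again a linear contraction, so the affine map
  \<open>x \<mapsto> B x + U\<close> (with \<open>U = lim u\<close>) has a fixed point \<open>p\<close>. The distances
  \<open>a\<^sub>n = \<parallel>v\<^sub>n - p\<parallel>\<close> then satisfy \<open>a\<^sub>n\<^sub>+\<^sub>1 \<le> c a\<^sub>n + e\<^sub>n\<close> with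
  \<open>e\<^sub>n = \<parallel>A\<^sub>n p - B p\<parallel> + \<parallel>u\<^sub>n - U\<parallel> \<rightarrow> 0\<close>, and such a perturbed contraction tends to \<open>0\<close>.
\<close>

lemma perturbed_contraction_tendsto_zero:
  fixes a e :: "nat \<Rightarrow> real"
  assumes c: "0 \<le> c" "c < 1" and a_nonneg: "\<And>n. 0 \<le> a n"
    and step: "\<And>n. a (Suc n) \<le> c * a n + e n" and e: "e \<longlonglongrightarrow> 0"
  shows "a \<longlonglongrightarrow> 0"
proof (rule LIMSEQ_I)
  fix r :: real assume "0 < r"
  define \<epsilon> where "\<epsilon> = r / 2"
  have "0 < \<epsilon>" using \<open>0 < r\<close> by (simp add: \<epsilon>_def)
  then obtain N where N: "\<And>n. n \<ge> N \<Longrightarrow> \<bar>e n\<bar> < \<epsilon> * (1 - c)"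
    using LIMSEQ_D[OF e, of "\<epsilon> * (1 - c)"] c by auto
  have bound: "a (N + k) \<le> c ^ k * a N + \<epsilon>" for k
  proof (induction k)
    case 0
    then show ?case using \<open>0 < \<epsilon>\<close> by simp
  next
    case (Suc k)
    have "a (N + Suc k) \<le> c * a (N + k) + e (N + k)" using step[of "N + k"] by simp
    also have "\<dots> \<le> c * (c ^ k * a N + \<epsilon>) + \<epsilon> * (1 - c)"
      using mult_left_mono[OF Suc.IH c(1)] N[of "N + k"] by auto
    also have "\<dots> = c ^ Suc k * a N + \<epsilon>" by (simp add: algebra_simps)
    finally show ?case .
  qed
  have "(\<lambda>k. c ^ k * a N) \<longlonglongrightarrow> 0"
    using tendsto_mult_left_zero[OF LIMSEQ_power_zero, of c "a N"] c by simp
  then obtain M where M: "\<And>k. k \<ge> M \<Longrightarrow> c ^ k * a N < \<epsilon>"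
    using LIMSEQ_D[of _ 0, OF _ \<open>0 < \<epsilon>\<close>] by fastforce
  have "\<bar>a n\<bar> < r" if "n \<ge> N + M" for n
  proof -
    obtain k where "n = N + k" "k \<ge> M" using \<open>n \<ge> N + M\<close> le_Suc_ex by force
    then show ?thesis using bound[of k] M[of k] a_nonneg[of n] by (simp add: \<epsilon>_def)
  qed
  then show "\<exists>n0. \<forall>n\<ge>n0. norm (a n - 0) < r" by auto
qed

lemma strong_limit_linear:
  fixes T :: "nat \<Rightarrow> 'a::real_vector \<Rightarrow> 'b::real_normed_vector"
  assumes "\<And>n. linear (T n)" and "\<And>x. (\<lambda>n. T n x) \<longlonglongrightarrow> B x"
  shows "linear B"
proof (rule linearI)
  fix x y and r :: real
  have "(\<lambda>n. T n (x + y)) \<longlonglongrightarrow> B x + B y"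
    using tendsto_add[OF assms(2)[of x] assms(2)[of y]] assms(1) by (simp add: linear_add)
  then show "B (x + y) = B x + B y" using assms(2) LIMSEQ_unique by blast
  have "(\<lambda>n. T n (r *\<^sub>R x)) \<longlonglongrightarrow> r *\<^sub>R B x"
    using tendsto_scaleR[OF tendsto_const assms(2)[of x], of r] assms(1) by (simp add: linear_scale)
  then show "B (r *\<^sub>R x) = r *\<^sub>R B x" using assms(2) LIMSEQ_unique by blast
qed

lemma strong_limit_norm_le:
  fixes T :: "nat \<Rightarrow> 'a::real_normed_vector \<Rightarrow> 'b::real_normed_vector"
  assumes "\<And>n x. norm (T n x) \<le> c * norm x" and "(\<lambda>n. T n x) \<longlonglongrightarrow> B x"
  shows "norm (B x) \<le> c * norm x"
  using tendsto_le[OF trivial_limit_sequentially tendsto_const tendsto_norm[OF assms(2)]] assms(1)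
  by simp

lemma perturbed_linear_iteration_convergent:
  fixes v w :: "nat \<Rightarrow> 'a::banach"
  assumes lin: "\<And>n. linear (T n)"
    and contr: "\<And>n x. norm (T n x) \<le> c * norm x" and c: "0 \<le> c" "c < 1"
    and T_lim: "\<And>x. (\<lambda>n. T n x) \<longlonglongrightarrow> B x"
    and w_lim: "w \<longlonglongrightarrow> W"
    and iter: "\<And>n. v (Suc n) = T n (v n) + w n"
  shows "v \<longlonglongrightarrow> (THE p. B p + W = p)"
proof -
  have "linear B" by (rule strong_limit_linear[OF lin T_lim])
  have B_contr: "norm (B x) \<le> c * norm x" for x
    by (rule strong_limit_norm_le[OF contr T_lim])
  have "dist (B x + W) (B y + W) \<le> c * dist x y" for x y
  proof -
    have "B x + W - (B y + W) = B (x - y)" by (simp add: linear_diff[OF \<open>linear B\<close>])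
    then show ?thesis using B_contr[of "x - y"] by (simp add: dist_norm)
  qed
  then have "\<exists>!p. B p + W = p" by (intro banach_fix_type[OF c]) blast
  define p where "p = (THE p. B p + W = p)"
  have p: "B p + W = p" unfolding p_def by (rule theI') fact
  define e where "e n = norm (T n p - B p) + norm (w n - W)" for n
  have "(\<lambda>n. norm (T n p - B p) + norm (w n - W)) \<longlonglongrightarrow> norm (B p - B p) + norm (W - W)"
    by (intro tendsto_intros T_lim w_lim)
  then have e: "e \<longlonglongrightarrow> 0" by (simp add: e_def[abs_def])
  have step: "norm (v (Suc n) - p) \<le> c * norm (v n - p) + e n" for n
  proof -
    have "v (Suc n) - p = T n (v n - p) + ((T n p - B p) + (w n - W))"
      using iter[of n] p by (simp add: linear_diff[OF lin] algebra_simps)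
    also have "norm \<dots> \<le> norm (T n (v n - p)) + e n"
      unfolding e_def by (meson add_left_mono norm_triangle_ineq order_trans)
    also have "\<dots> \<le> c * norm (v n - p) + e n" using contr by simp
    finally show ?thesis .
  qed
  have "(\<lambda>n. norm (v n - p)) \<longlonglongrightarrow> 0"
    by (rule perturbed_contraction_tendsto_zero[OF c _ step e]) simp
  then have "v \<longlonglongrightarrow> p" by (simp add: tendsto_norm_zero_iff LIM_zero_iff)
  then show ?thesis by (simp add: p_def)
qed


theorem lemmaA1:
  fixes u v :: "nat \<Rightarrow> 'a::banach"
    and A :: "nat \<Rightarrow> 'a \<Rightarrow> 'a"
  assumes u_conv: "convergent (\<lambda>n. u (n + 1))"
    and A_lin: "\<And>n. n \<ge> 1 \<Longrightarrow> bounded_linear (A n)"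
    and A_contr: "\<exists>c < 1. \<forall>n \<ge> 1. \<forall>x. norm (A n x) \<le> c * norm x"
    and A_conv: "\<And>x. convergent (\<lambda>n. A (n + 1) x)"
    and rec: "\<And>n. n \<ge> 1 \<Longrightarrow> v (n + 1) = A n (v n) + u n"
  shows "convergent (\<lambda>n. v (n + 1))"
proof -
  obtain c0 where "c0 < 1" and contr0: "\<And>n x. n \<ge> 1 \<Longrightarrow> norm (A n x) \<le> c0 * norm x"
    using A_contr by blast
  \<comment> \<open>on the trivial space \<open>c0\<close> may be negative\<close>
  define c where "c = max c0 0"
  have c: "0 \<le> c" "c < 1" using \<open>c0 < 1\<close> by (auto simp: c_def)
  have contr: "norm (A n x) \<le> c * norm x" if "n \<ge> 1" for n x
    using contr0[OF that, of x] mult_right_mono[of c0 c "norm x"] by (simp add: c_def)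
  obtain U where "(\<lambda>n. u (n + 1)) \<longlonglongrightarrow> U" using u_conv by (auto simp: convergent_def)
  moreover have "(\<lambda>n. A (n + 1) x) \<longlonglongrightarrow> lim (\<lambda>n. A (n + 1) x)" for x
    using A_conv by (simp add: convergent_LIMSEQ_iff)
  moreover have "linear (A (n + 1))" for n
    by (intro bounded_linear.linear A_lin) simp
  ultimately have "(\<lambda>n. v (n + 1)) \<longlonglongrightarrow> (THE p. lim (\<lambda>n. A (n + 1) p) + U = p)"
    using perturbed_linear_iteration_convergent[of "\<lambda>n. A (n + 1)" c] contr c rec
    by simp
  then show ?thesis by (auto simp: convergent_def)
qed

end
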